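(* If a grid-labelled graph $G$ satisfies $D(G)=D(G^\Gamma)$, then the corresponding density matrix $\rho(G)$ has positive semidefinite partial transpose, whether $G$ is interpreted as an $L$-graph, a $Q$-graph, a weighted ($L$- or $Q$-) graph, or a hybrid graph.
   Context: Grid-labelled graph: vertices $(i,j)$ on a grid, vertex $(i,j)$ identified with $|ij\rangle\in\mathbb{C}^{m_1}\otimes\mathbb{C}^{m_2}$. An $L$-edge $\{(i,j),(k,l)\}$ has state $\frac1{\sqrt2}(|ij\rangle-|kl\rangle)$ and a $Q$-edge has state $\frac1{\sqrt2}(|ij\rangle+|kl\rangle)$; an $L$-graph has only $L$-edges, a $Q$-graph only $Q$-edges, a hybrid graph both kinds; edges may carry positive weights $w_e$. The density matrix is $\rho(G)=\frac{1}{\sum_e w_e}\sum_e w_e|e\rangle\langle e|$, i.e. the normalized Laplacian ($D-A$, $D+A$, or $L(S_l)+Q(S_q)$ for hybrid graphs with $S_l,S_q$ the $L$- and $Q$-subgraphs). $D(G)$ is the diagonal matrix of (weighted) vertex degrees. The partial transpose graph $G^\Gamma$ has the same vertices and contains edge $\{(i,l),(k,j)\}$ (same type and weight) iff $G$ contains edge $\{(i,j),(k,l)\}$. The partial transpose is taken with respect to either factor of $\mathbb{C}^{m_1}\otimes\mathbb{C}^{m_2}$. *)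

theory Defs
  imports Complex_Main
begin

type_synonym vtx = "nat \<times> nat"
type_synonym edge = "vtx set"

text \<open>Vertex set of the grid; vertex (i,j) corresponds to basis vector |ij> of C^m1 (x) C^m2.\<close>
definition grid :: "nat \<Rightarrow> nat \<Rightarrow> vtx set" where
  "grid m1 m2 = {0..<m1} \<times> {0..<m2}"

definition hybrid_graph :: "nat \<Rightarrow> nat \<Rightarrow> edge set \<Rightarrow> edge set \<Rightarrow> (edge \<Rightarrow> real) \<Rightarrow> bool" where
  "hybrid_graph m1 m2 EL EQ w \<longleftrightarrow> EL \<inter> EQ = {} \<and>
     (\<forall>e\<in>EL \<union> EQ. card e = 2 \<and> e \<subseteq> grid m1 m2 \<and> w e > 0)"

text \<open>Edge state vectors: for e = {u,v} with u the chosen first vertex,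
  L-edge: (|u> - |v>)/sqrt 2,  Q-edge: (|u> + |v>)/sqrt 2.
  (The projector |e><e| does not depend on the chosen orientation.)\<close>
definition ket_L :: "edge \<Rightarrow> vtx \<Rightarrow> complex" where
  "ket_L e x = (if x \<in> e then (if x = (SOME u. u \<in> e) then 1 else -1) / complex_of_real (sqrt 2) else 0)"

definition ket_Q :: "edge \<Rightarrow> vtx \<Rightarrow> complex" where
  "ket_Q e x = (if x \<in> e then 1 / complex_of_real (sqrt 2) else 0)"

definition density :: "edge set \<Rightarrow> edge set \<Rightarrow> (edge \<Rightarrow> real) \<Rightarrow> vtx \<Rightarrow> vtx \<Rightarrow> complex" where
  "density EL EQ w x y =
     complex_of_real (1 / (\<Sum>e\<in>EL \<union> EQ. w e)) *
     ((\<Sum>e\<in>EL. complex_of_real (w e) * ket_L e x * cnj (ket_L e y)) +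
      (\<Sum>e\<in>EQ. complex_of_real (w e) * ket_Q e x * cnj (ket_Q e y)))"

definition wdegree :: "edge set \<Rightarrow> (edge \<Rightarrow> real) \<Rightarrow> vtx \<Rightarrow> real" where
  "wdegree E w x = (\<Sum>e\<in>{e\<in>E. x \<in> e}. w e)"

definition degree_matrix :: "edge set \<Rightarrow> (edge \<Rightarrow> real) \<Rightarrow> vtx \<Rightarrow> vtx \<Rightarrow> complex" where
  "degree_matrix E w x y = (if x = y then complex_of_real (wdegree E w x) else 0)"

definition pt_edge :: "edge \<Rightarrow> edge" where
  "pt_edge e = {(fst u, snd v) | u v. u \<in> e \<and> v \<in> e \<and> u \<noteq> v}"

text \<open>The partial transpose graph G^Gamma: L-edges pt_edge ` EL, Q-edges pt_edge ` EQ,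
  the edge pt_edge e carrying the weight of e (pt_edge is an involution on edges).\<close>
definition pt_weight :: "(edge \<Rightarrow> real) \<Rightarrow> edge \<Rightarrow> real" where
  "pt_weight w f = w (pt_edge f)"

definition ptranspose2 :: "(vtx \<Rightarrow> vtx \<Rightarrow> complex) \<Rightarrow> vtx \<Rightarrow> vtx \<Rightarrow> complex" where
  "ptranspose2 A x y = A (fst x, snd y) (fst y, snd x)"

definition ptranspose1 :: "(vtx \<Rightarrow> vtx \<Rightarrow> complex) \<Rightarrow> vtx \<Rightarrow> vtx \<Rightarrow> complex" where
  "ptranspose1 A x y = A (fst y, snd x) (fst x, snd y)"

definition psd :: "vtx set \<Rightarrow> (vtx \<Rightarrow> vtx \<Rightarrow> complex) \<Rightarrow> bool" where
  "psd V A \<longleftrightarrow> (\<forall>v :: vtx \<Rightarrow> complex.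
     let q = (\<Sum>x\<in>V. \<Sum>y\<in>V. cnj (v x) * A x y * v y) in q \<in> \<real> \<and> Re q \<ge> 0)"

end

theory Submission
  imports Defs
begin

(* Entrywise, rho(G) = (D(G) - A(S_l) + A(S_q)) / (2 W) with W the total weight.  Partial
   transposition fixes the diagonal and moves the off-diagonal entry at the pair {(i,j),(k,l)}
   to the pair {(i,l),(k,j)}, i.e. to the partner edge in G^Gamma, which has the same type and
   weight; G^Gamma also has total weight W.  So rho(G)^Gamma and rho(G^Gamma) agree off the
   diagonal always and on the diagonal exactly when D(G) = D(G^Gamma).  Then rho(G)^Gamma =
   rho(G^Gamma) is a nonnegative combination of projectors |e><e|, hence PSD.  As rho(G) is
   real symmetric, both partial transposes coincide. *)

definition qform :: "vtx set \<Rightarrow> (vtx \<Rightarrow> vtx \<Rightarrow> complex) \<Rightarrow> (vtx \<Rightarrow> complex) \<Rightarrow> complex" where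
  "qform V A v = (\<Sum>x\<in>V. \<Sum>y\<in>V. cnj (v x) * A x y * v y)"

lemma psd_iff_qform: "psd V A \<longleftrightarrow> (\<forall>v. qform V A v \<in> \<real> \<and> 0 \<le> Re (qform V A v))"
  by (simp add: psd_def qform_def)

lemma qform_add: "qform V (\<lambda>x y. A x y + B x y) v = qform V A v + qform V B v"
  by (simp add: qform_def algebra_simps sum.distrib)

lemma qform_scale: "qform V (\<lambda>x y. c * A x y) v = c * qform V A v"
  by (simp add: qform_def sum_distrib_left mult_ac)

lemma qform_sum: "qform V (\<lambda>x y. \<Sum>i\<in>I. A i x y) v = (\<Sum>i\<in>I. qform V (A i) v)"
  by (simp add: qform_def sum_distrib_left sum_distrib_right sum.swap[of _ I] mult_ac)

lemma qform_outer: "qform V (\<lambda>x y. u x * cnj (u y)) v = of_real ((cmod (\<Sum>x\<in>V. cnj (v x) * u x))\<^sup>2)"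
proof -
  let ?s = "\<Sum>x\<in>V. cnj (v x) * u x"
  have "qform V (\<lambda>x y. u x * cnj (u y)) v = ?s * cnj ?s"
    by (simp add: qform_def sum_product mult_ac)
  then show ?thesis by (simp only: complex_norm_square)
qed

lemma psd_cong: "psd V B \<Longrightarrow> (\<And>x y. x \<in> V \<Longrightarrow> y \<in> V \<Longrightarrow> A x y = B x y) \<Longrightarrow> psd V A"
  by (simp add: psd_def cong: sum.cong)

lemma psd_add: "psd V A \<Longrightarrow> psd V B \<Longrightarrow> psd V (\<lambda>x y. A x y + B x y)"
  by (simp add: psd_iff_qform qform_add)

lemma psd_scale: "0 \<le> c \<Longrightarrow> psd V A \<Longrightarrow> psd V (\<lambda>x y. of_real c * A x y)"
  by (simp add: psd_iff_qform qform_scale)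

lemma psd_sum: "(\<And>i. i \<in> I \<Longrightarrow> psd V (A i)) \<Longrightarrow> psd V (\<lambda>x y. \<Sum>i\<in>I. A i x y)"
  by (simp add: psd_iff_qform qform_sum sum_nonneg)

lemma psd_outer: "psd V (\<lambda>x y. u x * cnj (u y))"
  by (simp add: psd_iff_qform qform_outer)

lemma psd_scaled_outer: "0 \<le> c \<Longrightarrow> psd V (\<lambda>x y. of_real c * u x * cnj (u y))"
  using psd_scale[OF _ psd_outer] by (simp add: mult.assoc)

lemma psd_density:
  assumes "\<forall>e\<in>EL \<union> EQ. 0 \<le> w e"
  shows "psd V (density EL EQ w)"
proof -
  have "0 \<le> 1 / (\<Sum>e\<in>EL \<union> EQ. w e)"
    using assms by (auto intro!: sum_nonneg)
  moreover have "psd V (\<lambda>x y. \<Sum>e\<in>EL. of_real (w e) * ket_L e x * cnj (ket_L e y))"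
    using assms by (intro psd_sum psd_scaled_outer) auto
  moreover have "psd V (\<lambda>x y. \<Sum>e\<in>EQ. of_real (w e) * ket_Q e x * cnj (ket_Q e y))"
    using assms by (intro psd_sum psd_scaled_outer) auto
  ultimately show ?thesis
    unfolding density_def by (intro psd_scale psd_add)
qed

lemma ket_L_outer:
  assumes "card e = 2"
  shows "ket_L e a * cnj (ket_L e b) = (if a \<in> e \<and> b \<in> e then if a = b then 1/2 else -1/2 else 0)"
proof -
  define u where "u = (SOME u. u \<in> e)"
  have "u \<in> e"
    using assms unfolding u_def by (auto simp: some_in_eq)
  with assms have "card (e - {u}) = 1"
    by simp
  then obtain v where "e - {u} = {v}"
    by (rule card_1_singletonE)
  with \<open>u \<in> e\<close> have e: "e = {u, v}" "u \<noteq> v"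
    by auto
  define \<sigma> :: "vtx \<Rightarrow> real" where "\<sigma> x = (if x = u then 1 else if x = v then -1 else 0)" for x
  have "ket_L e x = of_real (\<sigma> x / sqrt 2)" for x
    unfolding ket_L_def u_def[symmetric] \<sigma>_def using e by auto
  then have "ket_L e a * cnj (ket_L e b) = of_real (\<sigma> a * \<sigma> b / 2)"
    by (simp flip: of_real_mult)
  with e show ?thesis
    by (cases "a = u"; cases "b = u"; cases "a = v"; cases "b = v") (simp_all add: \<sigma>_def)
qed

lemma ket_Q_outer: "ket_Q e a * cnj (ket_Q e b) = (if a \<in> e \<and> b \<in> e then 1/2 else 0)"
proof -
  have "ket_Q e x = of_real ((if x \<in> e then 1 else 0) / sqrt 2)" for x
    by (simp add: ket_Q_def)
  then show ?thesis
    by (simp flip: of_real_mult)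
qed

definition wadjacency :: "edge set \<Rightarrow> (edge \<Rightarrow> real) \<Rightarrow> vtx \<Rightarrow> vtx \<Rightarrow> real" where
  "wadjacency E w x y = (\<Sum>e\<in>{e\<in>E. x \<in> e \<and> y \<in> e}. w e)"

lemma sum_weight_indicator:
  assumes "finite E"
  shows "(\<Sum>e\<in>E. of_real (w e) * (if x \<in> e \<and> y \<in> e then c else 0)) = of_real (wadjacency E w x y) * c"
  unfolding wadjacency_def of_real_sum sum_distrib_right sum.inter_filter[OF assms]
  by (rule sum.cong) auto

lemma density_entry:
  assumes "finite EL" "finite EQ" "\<forall>e\<in>EL. card e = 2"
  shows "density EL EQ w x y = of_real
    ((wadjacency EQ w x y + (if x = y then 1 else -1) * wadjacency EL w x y) / (2 * (\<Sum>e\<in>EL \<union> EQ. w e)))"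
proof -
  have "(\<Sum>e\<in>EL. of_real (w e) * ket_L e x * cnj (ket_L e y))
      = (\<Sum>e\<in>EL. of_real (w e) * (if x \<in> e \<and> y \<in> e then if x = y then 1/2 else -1/2 else 0))"
    using assms(3) by (intro sum.cong) (simp_all add: mult.assoc ket_L_outer)
  also have "\<dots> = of_real (wadjacency EL w x y) * (if x = y then 1/2 else -1/2)"
    by (rule sum_weight_indicator[OF assms(1)])
  finally have L: "(\<Sum>e\<in>EL. of_real (w e) * ket_L e x * cnj (ket_L e y)) = \<dots>" .
  have "(\<Sum>e\<in>EQ. of_real (w e) * ket_Q e x * cnj (ket_Q e y))
      = (\<Sum>e\<in>EQ. of_real (w e) * (if x \<in> e \<and> y \<in> e then 1/2 else 0))"
    by (simp add: mult.assoc ket_Q_outer)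
  also have "\<dots> = of_real (wadjacency EQ w x y) * (1/2)"
    by (rule sum_weight_indicator[OF assms(2)])
  finally have Q: "(\<Sum>e\<in>EQ. of_real (w e) * ket_Q e x * cnj (ket_Q e y)) = \<dots>" .
  have "density EL EQ w x y = of_real (1 / (\<Sum>e\<in>EL \<union> EQ. w e)
      * (wadjacency EL w x y * (if x = y then 1/2 else -1/2) + wadjacency EQ w x y / 2))"
    unfolding density_def L Q by simp
  also have "\<dots> = of_real
      ((wadjacency EQ w x y + (if x = y then 1 else -1) * wadjacency EL w x y) / (2 * (\<Sum>e\<in>EL \<union> EQ. w e)))"
    by (rule arg_cong[where f = of_real])
      (cases "x = y", simp_all add: algebra_simps add_divide_distrib diff_divide_distrib)
  finally show ?thesis .
qed

lemma wdegree_Un: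
  assumes "finite A" "finite B" "A \<inter> B = {}"
  shows "wdegree (A \<union> B) w x = wadjacency A w x x + wadjacency B w x x"
proof -
  have "{e \<in> A \<union> B. x \<in> e} = {e \<in> A. x \<in> e \<and> x \<in> e} \<union> {e \<in> B. x \<in> e \<and> x \<in> e}"
    by auto
  then show ?thesis
    unfolding wdegree_def wadjacency_def using assms by (simp add: sum.union_disjoint disjoint_iff)
qed

lemma density_commute: "density EL EQ w x y = density EL EQ w y x"
proof -
  have "cnj (ket_L e z) = ket_L e z" "cnj (ket_Q e z) = ket_Q e z" for e z
    by (simp_all add: ket_L_def ket_Q_def)
  then show ?thesis
    by (simp add: density_def mult_ac)
qed

lemma ptranspose1_eq_ptranspose2: "(\<And>x y. A x y = A y x) \<Longrightarrow> ptranspose1 A = ptranspose2 A"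
  by (simp add: fun_eq_iff ptranspose1_def ptranspose2_def)

lemma pt_edge_doubleton: "p \<noteq> q \<Longrightarrow> pt_edge {p, q} = {(fst p, snd q), (fst q, snd p)}"
  unfolding pt_edge_def by blast

lemma
  assumes "card e = 2"
  shows card_pt_edge: "card (pt_edge e) = 2"
    and pt_edge_pt_edge: "pt_edge (pt_edge e) = e"
proof -
  obtain p q where e: "e = {p, q}" "p \<noteq> q"
    using assms by (meson card_2_iff)
  then have "(fst p, snd q) \<noteq> (fst q, snd p)"
    by (auto simp: prod_eq_iff)
  then show "card (pt_edge e) = 2" "pt_edge (pt_edge e) = e"
    using e by (auto simp: pt_edge_doubleton)
qed

lemma pt_edge_mem_iff:
  assumes "card e = 2" "x \<noteq> y"
  shows "x \<in> pt_edge e \<and> y \<in> pt_edge e \<longleftrightarrow> (fst x, snd y) \<in> e \<and> (fst y, snd x) \<in> e"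
proof -
  obtain p q where e: "e = {p, q}" "p \<noteq> q"
    using assms by (meson card_2_iff)
  show ?thesis
    using assms(2) e by (cases x, cases y, cases p, cases q) (auto simp: pt_edge_doubleton)
qed

lemma pt_edge_subset_grid: "e \<subseteq> grid m1 m2 \<Longrightarrow> pt_edge e \<subseteq> grid m1 m2"
  by (auto simp: pt_edge_def grid_def)

lemma inj_on_pt_edge: "\<forall>e\<in>E. card e = 2 \<Longrightarrow> inj_on pt_edge E"
  by (metis inj_on_inverseI pt_edge_pt_edge)

lemma sum_pt_weight_image:
  "\<forall>e\<in>E. card e = 2 \<Longrightarrow> (\<Sum>f\<in>pt_edge ` E. pt_weight w f) = (\<Sum>e\<in>E. w e)"
  by (simp add: sum.reindex inj_on_pt_edge pt_weight_def pt_edge_pt_edge)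

lemma wadjacency_pt_edge:
  assumes "\<forall>e\<in>E. card e = 2" "x \<noteq> y"
  shows "wadjacency (pt_edge ` E) (pt_weight w) x y = wadjacency E w (fst x, snd y) (fst y, snd x)"
proof -
  have "{f \<in> pt_edge ` E. x \<in> f \<and> y \<in> f} = pt_edge ` {e \<in> E. x \<in> pt_edge e \<and> y \<in> pt_edge e}"
    by blast
  also have "{e \<in> E. x \<in> pt_edge e \<and> y \<in> pt_edge e} = {e \<in> E. (fst x, snd y) \<in> e \<and> (fst y, snd x) \<in> e}"
    using assms pt_edge_mem_iff by blast
  finally show ?thesis
    unfolding wadjacency_def using assms(1) by (simp add: sum_pt_weight_image)
qed

lemma hybrid_graph_pt_edge:
  assumes "hybrid_graph m1 m2 EL EQ w"
  shows "hybrid_graph m1 m2 (pt_edge ` EL) (pt_edge ` EQ) (pt_weight w)"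
proof -
  have "inj_on pt_edge (EL \<union> EQ)"
    using assms by (simp add: hybrid_graph_def inj_on_pt_edge)
  then have "pt_edge ` EL \<inter> pt_edge ` EQ = {}"
    using assms by (simp add: hybrid_graph_def flip: inj_on_image_Int)
  moreover have "card (pt_edge e) = 2 \<and> pt_edge e \<subseteq> grid m1 m2 \<and> 0 < pt_weight w (pt_edge e)"
    if "e \<in> EL \<union> EQ" for e
    using assms that by (simp add: hybrid_graph_def card_pt_edge pt_edge_subset_grid pt_weight_def pt_edge_pt_edge)
  ultimately show ?thesis
    by (auto simp: hybrid_graph_def)
qed

lemma hybrid_graph_finite:
  assumes "hybrid_graph m1 m2 EL EQ w"
  shows "finite EL" "finite EQ"
proof -
  have "EL \<union> EQ \<subseteq> Pow (grid m1 m2)"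
    using assms by (auto simp: hybrid_graph_def)
  moreover have "finite (Pow (grid m1 m2))"
    by (simp add: grid_def)
  ultimately show "finite EL" "finite EQ"
    by (meson finite_Un finite_subset)+
qed

lemma ptranspose2_density:
  assumes G: "hybrid_graph m1 m2 EL EQ w"
    and deg: "wdegree (EL \<union> EQ) w x = wdegree (pt_edge ` EL \<union> pt_edge ` EQ) (pt_weight w) x"
  shows "ptranspose2 (density EL EQ w) x y = density (pt_edge ` EL) (pt_edge ` EQ) (pt_weight w) x y"
proof -
  have G': "hybrid_graph m1 m2 (pt_edge ` EL) (pt_edge ` EQ) (pt_weight w)"
    using G by (rule hybrid_graph_pt_edge)
  note fin = hybrid_graph_finite[OF G] and fin' = hybrid_graph_finite[OF G']
  have card: "\<forall>e\<in>EL \<union> EQ. card e = 2" and disj: "EL \<inter> EQ = {}"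
    using G by (auto simp: hybrid_graph_def)
  then have cardL: "\<forall>e\<in>EL. card e = 2"
    by simp
  have card': "\<forall>f\<in>pt_edge ` EL. card f = 2" and disj': "pt_edge ` EL \<inter> pt_edge ` EQ = {}"
    using G' by (auto simp: hybrid_graph_def)
  define W where "W = (\<Sum>e\<in>EL \<union> EQ. w e)"
  have W': "(\<Sum>f\<in>pt_edge ` EL \<union> pt_edge ` EQ. pt_weight w f) = W"
    using card by (simp add: W_def sum_pt_weight_image flip: image_Un)
  show ?thesis
  proof (cases "x = y")
    case True
    have "ptranspose2 (density EL EQ w) x y = density EL EQ w x x"
      by (simp add: ptranspose2_def True)
    also have "\<dots> = of_real (wdegree (EL \<union> EQ) w x / (2 * W))"
      using fin card disj by (simp add: density_entry wdegree_Un W_def)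
    also have "\<dots> = of_real (wdegree (pt_edge ` EL \<union> pt_edge ` EQ) (pt_weight w) x / (2 * W))"
      by (simp add: deg)
    also have "\<dots> = density (pt_edge ` EL) (pt_edge ` EQ) (pt_weight w) x y"
      using fin' card' disj' True by (simp add: density_entry wdegree_Un W')
    finally show ?thesis .
  next
    case False
    let ?a = "(fst x, snd y)" and ?b = "(fst y, snd x)"
    have neq: "?a \<noteq> ?b"
      using False by (auto simp: prod_eq_iff)
    have "ptranspose2 (density EL EQ w) x y
        = of_real ((wadjacency EQ w ?a ?b - wadjacency EL w ?a ?b) / (2 * W))"
      unfolding ptranspose2_def density_entry[OF fin cardL] W_def if_not_P[OF neq] by simp
    also have "\<dots> = density (pt_edge ` EL) (pt_edge ` EQ) (pt_weight w) x y"
      using False card unfolding density_entry[OF fin' card'] W' by (simp add: wadjacency_pt_edge)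
    finally show ?thesis .
  qed
qed

theorem mainTheorem9:
  fixes m1 m2 :: nat and EL EQ :: "edge set" and w :: "edge \<Rightarrow> real"
  assumes G: "hybrid_graph m1 m2 EL EQ w"
    and D: "\<forall>x\<in>grid m1 m2. \<forall>y\<in>grid m1 m2.
              degree_matrix (EL \<union> EQ) w x y
              = degree_matrix (pt_edge ` EL \<union> pt_edge ` EQ) (pt_weight w) x y"
  shows "psd (grid m1 m2) (ptranspose2 (density EL EQ w))
       \<and> psd (grid m1 m2) (ptranspose1 (density EL EQ w))"
proof -
  let ?\<rho> = "density EL EQ w"
  let ?\<rho>\<Gamma> = "density (pt_edge ` EL) (pt_edge ` EQ) (pt_weight w)"
  have "psd (grid m1 m2) ?\<rho>\<Gamma>"
    using hybrid_graph_pt_edge[OF G] by (intro psd_density) (auto simp: hybrid_graph_def intro: less_imp_le)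
  moreover have "ptranspose2 ?\<rho> x y = ?\<rho>\<Gamma> x y" if "x \<in> grid m1 m2" for x y
  proof (rule ptranspose2_density[OF G])
    show "wdegree (EL \<union> EQ) w x = wdegree (pt_edge ` EL \<union> pt_edge ` EQ) (pt_weight w) x"
      using D[rule_format, OF that that] by (simp add: degree_matrix_def)
  qed
  ultimately have "psd (grid m1 m2) (ptranspose2 ?\<rho>)"
    by (rule psd_cong)
  moreover have "ptranspose1 ?\<rho> = ptranspose2 ?\<rho>"
    by (rule ptranspose1_eq_ptranspose2) (rule density_commute)
  ultimately show ?thesis
    by simp
qed

end
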